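(* Let $\mathcal{G}=(\mathcal{V},\mathcal{E})$ and $\mathcal{G}'=(\mathcal{V}',\mathcal{E}')$ be finite graphs with no isolated vertices such that $\min\{|\mathcal{V}|,|\mathcal{V}'|\}\ge4$. Then $\mathcal{G}$ is contained in $\mathcal{G}'$ if and only if $D(\mathcal{G})\le D(\mathcal{G}')$.
   Context: $\mathcal{G}$ is contained in $\mathcal{G}'$ if $\mathcal{G}$ is isomorphic to a subgraph of $\mathcal{G}'$ (a subgraph $(\mathcal{V}_0,\mathcal{E}_0)$ having $\mathcal{V}_0\subseteq\mathcal{V}'$, $\mathcal{E}_0\subseteq\mathcal{E}'$). An abstract storage device (ASD) is a pair $D=(\mathcal{S}_D,\mathcal{P}_D)$, $\mathcal{S}_D$ a finite set and $\mathcal{P}_D$ a finite family of partitions of $\mathcal{S}_D$. For a partition $\pi$ of $\mathcal{S}'$ and $\phi:\mathcal{S}\to\mathcal{S}'$, $\pi\circ\phi$ is the partition of $\mathcal{S}$ with $x,y$ in the same block iff $\phi(x),\phi(y)$ are in the same block of $\pi$; $\pi\preceq\rho$ means every block of $\pi$ lies in a block of $\rho$. $D\le D'$ means there exist $\phi:\mathcal{S}_D\to\mathcal{S}_{D'}$, $\alpha:\mathcal{P}_D\to\mathcal{P}_{D'}$ with $\alpha(\pi)\circ\phi\preceq\pi$ for all $\pi\in\mathcal{P}_D$. The graph device $D(\mathcal{G})$ has state space $\mathcal{V}$ and partition set $\{\pi_e:e\in\mathcal{E}\}$, where for $e=\{u,v\}$, $\pi_e=\{\{u\},\{v\},\mathcal{V}\setminus\{u,v\}\}$.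 *)

theory Defs
  imports "HOL-Library.Disjoint_Sets"
begin

definition fin_graph :: "'a set \<Rightarrow> 'a set set \<Rightarrow> bool" where
  "fin_graph V E \<longleftrightarrow> finite V \<and>
     (\<forall>e\<in>E. \<exists>u v. e = {u, v} \<and> u \<noteq> v \<and> u \<in> V \<and> v \<in> V)"

definition no_isolated :: "'a set \<Rightarrow> 'a set set \<Rightarrow> bool" where
  "no_isolated V E \<longleftrightarrow> (\<forall>v\<in>V. \<exists>e\<in>E. v \<in> e)"

definition graph_iso :: "'a set \<Rightarrow> 'a set set \<Rightarrow> 'b set \<Rightarrow> 'b set set \<Rightarrow> bool" where
  "graph_iso V E W F \<longleftrightarrow> (\<exists>f. bij_betw f V W \<and>
     (\<forall>u\<in>V. \<forall>v\<in>V. {u, v} \<in> E \<longleftrightarrow> {f u, f v} \<in> F))"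

definition graph_contained :: "'a set \<Rightarrow> 'a set set \<Rightarrow> 'b set \<Rightarrow> 'b set set \<Rightarrow> bool" where
  "graph_contained V E V' E' \<longleftrightarrow> (\<exists>V0 E0. V0 \<subseteq> V' \<and> E0 \<subseteq> E' \<and> fin_graph V0 E0 \<and>
     graph_iso V E V0 E0)"

text \<open>Abstract storage devices: a state set and a family of partitions of it.\<close>
type_synonym 'a asd = "'a set \<times> 'a set set set"

definition is_asd :: "'a asd \<Rightarrow> bool" where
  "is_asd D \<longleftrightarrow> finite (fst D) \<and> finite (snd D) \<and> (\<forall>\<pi>\<in>snd D. partition_on (fst D) \<pi>)"

definition same_block :: "'a set set \<Rightarrow> 'a \<Rightarrow> 'a \<Rightarrow> bool" where
  "same_block P x y \<longleftrightarrow> (\<exists>B\<in>P. x \<in> B \<and> y \<in> B)"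

definition pullback :: "'b set set \<Rightarrow> ('a \<Rightarrow> 'b) \<Rightarrow> 'a set \<Rightarrow> 'a set set" where
  "pullback P \<phi> S = (\<lambda>x. {y\<in>S. same_block P (\<phi> x) (\<phi> y)}) ` S"

definition refines :: "'a set set \<Rightarrow> 'a set set \<Rightarrow> bool" where
  "refines P Q \<longleftrightarrow> (\<forall>B\<in>P. \<exists>C\<in>Q. B \<subseteq> C)"

definition asd_le :: "'a asd \<Rightarrow> 'b asd \<Rightarrow> bool" where
  "asd_le D D' \<longleftrightarrow> (\<exists>\<phi> \<alpha>. \<phi> \<in> fst D \<rightarrow> fst D' \<and> \<alpha> \<in> snd D \<rightarrow> snd D' \<and>
     (\<forall>\<pi>\<in>snd D. refines (pullback (\<alpha> \<pi>) \<phi> (fst D)) \<pi>))"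

definition edge_partition :: "'a set \<Rightarrow> 'a set \<Rightarrow> 'a set set" where
  "edge_partition V e = ((\<lambda>u. {u}) ` e \<union> {V - e}) - {{}}"

definition graph_device :: "'a set \<Rightarrow> 'a set set \<Rightarrow> 'a asd" where
  "graph_device V E = (V, edge_partition V ` E)"

end

theory Submission
  imports Defs
begin

text \<open>Both sides are equivalent to the existence of an injective vertex map sending edges to
  edges. Such a map f yields the device morphism (f, pi_e \<mapsto> pi_(f e)). Conversely, if
  (\<phi>, \<alpha>) is a device morphism and \<alpha> pi_e = pi_e', then each endpoint x of e is the only
  vertex whose image lies in the (\<alpha> pi_e)-block of \<phi> x; this makes \<phi> injective, and it
  forces \<phi> x \<in> e', since otherwise every vertex mapped outside e' would equal x, leaving at
  most 1 + 2 < 4 vertices.\<close>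

definition graph_embedding :: "'a set \<Rightarrow> 'a set set \<Rightarrow> 'b set \<Rightarrow> 'b set set \<Rightarrow> ('a \<Rightarrow> 'b) \<Rightarrow> bool"
  where "graph_embedding V E V' E' f \<longleftrightarrow> inj_on f V \<and> f \<in> V \<rightarrow> V' \<and> (\<forall>e\<in>E. f ` e \<in> E')"

lemma fin_graph_edgeE:
  assumes "fin_graph V E" "e \<in> E"
  obtains u v where "e = {u, v}" "u \<noteq> v" "u \<in> V" "v \<in> V"
  using assms unfolding fin_graph_def by blast

lemma fin_graph_edge_subset: "fin_graph V E \<Longrightarrow> e \<in> E \<Longrightarrow> e \<subseteq> V"
  by (erule fin_graph_edgeE) auto

lemma fin_graph_edge_card: "fin_graph V E \<Longrightarrow> e \<in> E \<Longrightarrow> card e = 2"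
  by (erule fin_graph_edgeE) auto

lemma same_block_edge_partition_iff:
  assumes "p \<in> W" "q \<in> W"
  shows "same_block (edge_partition W e) p q \<longleftrightarrow> p = q \<or> p \<notin> e \<and> q \<notin> e"
  using assms unfolding same_block_def edge_partition_def by auto

lemma refines_pullback_iff:
  "refines (pullback P \<phi> V) Q \<longleftrightarrow> (\<forall>x\<in>V. \<exists>C\<in>Q. {y\<in>V. same_block P (\<phi> x) (\<phi> y)} \<subseteq> C)"
  unfolding refines_def pullback_def by auto

lemma refines_pullback_image_edge_partition:
  assumes inj: "inj_on f V" and fV: "f \<in> V \<rightarrow> V'" and eV: "e \<subseteq> V"
  shows "refines (pullback (edge_partition V' (f ` e)) f V) (edge_partition V e)"
  unfolding refines_pullback_iff
proof
  fix x assume x: "x \<in> V"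
  have "same_block (edge_partition V' (f ` e)) (f x) (f y) \<longleftrightarrow> x = y \<or> x \<notin> e \<and> y \<notin> e"
    if y: "y \<in> V" for y
    using fV x y by (simp add: same_block_edge_partition_iff funcset_mem inj_on_eq_iff[OF inj]
        inj_on_image_mem_iff[OF inj _ eV])
  then have block: "{y\<in>V. same_block (edge_partition V' (f ` e)) (f x) (f y)}
      = {y\<in>V. x = y \<or> x \<notin> e \<and> y \<notin> e}"
    by blast
  show "\<exists>C\<in>edge_partition V e. {y\<in>V. same_block (edge_partition V' (f ` e)) (f x) (f y)} \<subseteq> C"
  proof (cases "x \<in> e")
    case True
    then show ?thesis
      unfolding block by (intro bexI[of _ "{x}"]) (auto simp: edge_partition_def)
  next
    case False
    then show ?thesis
      unfolding block using x by (intro bexI[of _ "V - e"]) (auto simp: edge_partition_def)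
  qed
qed

lemma graph_embedding_imp_asd_le:
  assumes "fin_graph V E" and emb: "graph_embedding V E V' E' f"
  shows "asd_le (graph_device V E) (graph_device V' E')"
proof -
  define edge_of where "edge_of \<pi> = (SOME e. e \<in> E \<and> \<pi> = edge_partition V e)" for \<pi>
  have edge_of: "edge_of \<pi> \<in> E \<and> \<pi> = edge_partition V (edge_of \<pi>)"
    if "\<pi> \<in> edge_partition V ` E" for \<pi>
    unfolding edge_of_def by (rule someI_ex) (use that in blast)
  define \<alpha> where "\<alpha> \<pi> = edge_partition V' (f ` edge_of \<pi>)" for \<pi>
  have "\<alpha> \<in> edge_partition V ` E \<rightarrow> edge_partition V' ` E'"
    using emb edge_of by (auto simp: \<alpha>_def graph_embedding_def)
  moreover have "\<forall>\<pi>\<in>edge_partition V ` E. refines (pullback (\<alpha> \<pi>) f V) \<pi>"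
  proof
    fix \<pi> assume \<pi>: "\<pi> \<in> edge_partition V ` E"
    show "refines (pullback (\<alpha> \<pi>) f V) \<pi>"
      using refines_pullback_image_edge_partition[of f V V' "edge_of \<pi>"] edge_of[OF \<pi>]
        emb fin_graph_edge_subset[OF assms(1)]
      by (simp add: \<alpha>_def graph_embedding_def)
  qed
  ultimately show ?thesis
    using emb unfolding asd_le_def graph_device_def graph_embedding_def fst_conv snd_conv
    by blast
qed

lemma refines_pullback_edge_partition_endpoint:
  assumes ref: "refines (pullback (edge_partition V' e') \<phi> V) (edge_partition V e)"
    and \<phi>: "\<phi> \<in> V \<rightarrow> V'" and x: "x \<in> e" "x \<in> V" and y: "y \<in> V"
    and sb: "same_block (edge_partition V' e') (\<phi> x) (\<phi> y)"
  shows "y = x"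
proof -
  obtain B where B: "B \<in> edge_partition V e"
    "{z\<in>V. same_block (edge_partition V' e') (\<phi> x) (\<phi> z)} \<subseteq> B"
    using ref x(2) unfolding refines_pullback_iff by blast
  have "\<phi> x \<in> V'" using \<phi> x(2) by (rule funcset_mem)
  then have "x \<in> B" "y \<in> B"
    using B(2) x(2) y sb by (auto simp: same_block_edge_partition_iff)
  moreover have "B = {x}"
    using B(1) x(1) \<open>x \<in> B\<close> by (auto simp: edge_partition_def)
  ultimately show ?thesis by simp
qed

lemma refines_pullback_edge_partition_inj:
  assumes \<phi>: "\<phi> \<in> V \<rightarrow> V'" and cover: "\<forall>x\<in>V. \<exists>e\<in>E. x \<in> e"
    and ref: "\<forall>e\<in>E. \<exists>e'. refines (pullback (edge_partition V' e') \<phi> V) (edge_partition V e)"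
  shows "inj_on \<phi> V"
proof (rule inj_onI)
  fix x y assume x: "x \<in> V" and y: "y \<in> V" and eq: "\<phi> x = \<phi> y"
  obtain e e' where "x \<in> e"
    and "refines (pullback (edge_partition V' e') \<phi> V) (edge_partition V e)"
    using cover ref x by blast
  moreover have "same_block (edge_partition V' e') (\<phi> x) (\<phi> y)"
    using eq funcset_mem[OF \<phi> x] by (simp add: same_block_edge_partition_iff)
  ultimately have "y = x"
    using refines_pullback_edge_partition_endpoint[OF _ \<phi> _ x y] by blast
  then show "x = y" ..
qed

lemma refines_pullback_edge_partition_image_subset:
  assumes ref: "refines (pullback (edge_partition V' e') \<phi> V) (edge_partition V e)"
    and \<phi>: "\<phi> \<in> V \<rightarrow> V'" and inj: "inj_on \<phi> V" and eV: "e \<subseteq> V"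
    and finV: "finite V" and cardV: "card V \<ge> 4" and card_e': "card e' = 2"
  shows "\<phi> ` e \<subseteq> e'"
proof (rule ccontr)
  assume "\<not> \<phi> ` e \<subseteq> e'"
  then obtain w where w: "w \<in> e" "\<phi> w \<notin> e'" by blast
  have "y = w" if y: "y \<in> V" "\<phi> y \<notin> e'" for y
  proof -
    have "w \<in> V" using w(1) eV by blast
    moreover have "same_block (edge_partition V' e') (\<phi> w) (\<phi> y)"
      using funcset_mem[OF \<phi> \<open>w \<in> V\<close>] funcset_mem[OF \<phi> y(1)] w(2) y(2)
      by (simp add: same_block_edge_partition_iff)
    ultimately show ?thesis
      using refines_pullback_edge_partition_endpoint[OF ref \<phi> w(1)] y(1) by blast
  qed
  then have "V \<subseteq> insert w {y\<in>V. \<phi> y \<in> e'}" by blast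
  then have "card V \<le> card (insert w {y\<in>V. \<phi> y \<in> e'})"
    using finV by (intro card_mono) auto
  also have "\<dots> \<le> Suc (card {y\<in>V. \<phi> y \<in> e'})"
    using finV by (simp add: card_insert_if)
  also have "\<dots> \<le> Suc (card e')"
    using inj card_e' by (intro Suc_le_mono[THEN iffD2] card_inj_on_le)
      (auto intro: inj_on_subset card_ge_0_finite)
  finally show False using cardV card_e' by simp
qed

lemma asd_le_imp_graph_embedding:
  assumes G: "fin_graph V E" and G': "fin_graph V' E'" and "no_isolated V E"
    and cardV: "card V \<ge> 4" and le: "asd_le (graph_device V E) (graph_device V' E')"
  shows "\<exists>\<phi>. graph_embedding V E V' E' \<phi>"
proof -
  obtain \<phi> \<alpha> where \<phi>: "\<phi> \<in> V \<rightarrow> V'"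
    and \<alpha>: "\<alpha> \<in> edge_partition V ` E \<rightarrow> edge_partition V' ` E'"
    and ref: "\<forall>\<pi>\<in>edge_partition V ` E. refines (pullback (\<alpha> \<pi>) \<phi> V) \<pi>"
    using le unfolding asd_le_def graph_device_def by auto
  have target: "\<exists>e'\<in>E'. refines (pullback (edge_partition V' e') \<phi> V) (edge_partition V e)"
    if e: "e \<in> E" for e
  proof -
    from \<alpha> e obtain e' where "e' \<in> E'" "\<alpha> (edge_partition V e) = edge_partition V' e'"
      by blast
    then show ?thesis using ref e by (metis imageI)
  qed
  have inj: "inj_on \<phi> V"
    by (rule refines_pullback_edge_partition_inj[OF \<phi>])
      (use assms(3) target in \<open>auto simp: no_isolated_def\<close>)
  have "\<phi> ` e \<in> E'" if e: "e \<in> E" for e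
  proof -
    obtain e' where e': "e' \<in> E'"
      and ref_e: "refines (pullback (edge_partition V' e') \<phi> V) (edge_partition V e)"
      using target e by blast
    have eV: "e \<subseteq> V" and card_e: "card e = 2" and card_e': "card e' = 2"
      using fin_graph_edge_subset[OF G e] fin_graph_edge_card[OF G e]
        fin_graph_edge_card[OF G' e'] .
    have "finite V" using G by (simp add: fin_graph_def)
    then have "\<phi> ` e \<subseteq> e'"
      using refines_pullback_edge_partition_image_subset[OF ref_e \<phi> inj eV] cardV card_e'
      by simp
    moreover have "card (\<phi> ` e) = card e'"
      using card_image[OF inj_on_subset[OF inj eV]] card_e card_e' by simp
    ultimately have "\<phi> ` e = e'"
      using card_e' by (intro card_subset_eq) (auto intro: card_ge_0_finite)
    then show ?thesis using e' by simp
  qed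
  then show ?thesis using inj \<phi> unfolding graph_embedding_def by blast
qed

lemma graph_contained_imp_embedding:
  assumes G: "fin_graph V E" and "graph_contained V E V' E'"
  shows "\<exists>f. graph_embedding V E V' E' f"
proof -
  obtain V0 E0 f where V0: "V0 \<subseteq> V'" and E0: "E0 \<subseteq> E'" and bij: "bij_betw f V V0"
    and edges: "\<forall>u\<in>V. \<forall>v\<in>V. {u, v} \<in> E \<longleftrightarrow> {f u, f v} \<in> E0"
    using assms(2) unfolding graph_contained_def graph_iso_def by blast
  have "f ` e \<in> E'" if e: "e \<in> E" for e
  proof -
    from G e obtain u v where "e = {u, v}" "u \<in> V" "v \<in> V"
      by (rule fin_graph_edgeE)
    then show ?thesis using e edges E0 by auto
  qed
  moreover have "inj_on f V" "f \<in> V \<rightarrow> V'"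
    using bij V0 by (auto simp: bij_betw_def)
  ultimately show ?thesis unfolding graph_embedding_def by blast
qed

lemma graph_embedding_imp_contained:
  assumes G: "fin_graph V E" and emb: "graph_embedding V E V' E' f"
  shows "graph_contained V E V' E'"
proof -
  have inj: "inj_on f V" and fV: "f ` V \<subseteq> V'" and fE: "(`) f ` E \<subseteq> E'"
    using emb unfolding graph_embedding_def by auto
  have "fin_graph (f ` V) ((`) f ` E)"
    unfolding fin_graph_def
  proof (intro conjI ballI)
    show "finite (f ` V)" using G by (simp add: fin_graph_def)
  next
    fix e0 assume "e0 \<in> (`) f ` E"
    then obtain e where e: "e \<in> E" "e0 = f ` e" by blast
    from G e(1) obtain u v where "e = {u, v}" "u \<noteq> v" "u \<in> V" "v \<in> V"
      by (rule fin_graph_edgeE)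
    then show "\<exists>u v. e0 = {u, v} \<and> u \<noteq> v \<and> u \<in> f ` V \<and> v \<in> f ` V"
      using e(2) inj_on_eq_iff[OF inj] by blast
  qed
  moreover have "{u, v} \<in> E \<longleftrightarrow> {f u, f v} \<in> (`) f ` E" if uv: "u \<in> V" "v \<in> V" for u v
  proof
    assume "{f u, f v} \<in> (`) f ` E"
    then obtain e where e: "e \<in> E" "f ` {u, v} = f ` e" by auto
    then have "{u, v} = e"
      using inj_on_image_eq_iff[OF inj] fin_graph_edge_subset[OF G e(1)] uv by blast
    then show "{u, v} \<in> E" using e(1) by simp
  qed (metis image_empty image_insert image_eqI)
  ultimately show ?thesis
    using fV fE inj_on_imp_bij_betw[OF inj] unfolding graph_contained_def graph_iso_def by blast
qed

theorem lemma3: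
  fixes V :: "'a set" and E :: "'a set set" and V' :: "'b set" and E' :: "'b set set"
  assumes "fin_graph V E" and "fin_graph V' E'"
    and "no_isolated V E" and "no_isolated V' E'"
    and "min (card V) (card V') \<ge> 4"
  shows "graph_contained V E V' E' \<longleftrightarrow> asd_le (graph_device V E) (graph_device V' E')"
proof
  assume "graph_contained V E V' E'"
  then obtain f where "graph_embedding V E V' E' f"
    using graph_contained_imp_embedding assms(1) by blast
  then show "asd_le (graph_device V E) (graph_device V' E')"
    using graph_embedding_imp_asd_le assms(1) by blast
next
  assume "asd_le (graph_device V E) (graph_device V' E')"
  then obtain \<phi> where "graph_embedding V E V' E' \<phi>"
    using asd_le_imp_graph_embedding assms(1-3,5) by fastforce
  then show "graph_contained V E V' E'"
    using graph_embedding_imp_contained assms(1) by blast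
qed

end
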